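(* For any generalized causal teams $S$ and $T$ over a signature $\sigma$: $S\models^g\bigvee_{\mathcal F\in\mathbb F_\sigma}\big(\Theta^{(T^{\mathcal F})^-}\wedge\Phi^{\mathcal F}\big)$ if and only if $S\preccurlyeq T$.
   Context: A signature $\sigma=(\mathrm{Dom},\mathrm{Ran})$: $\mathrm{Dom}$ nonempty finite set of variables, each with nonempty finite range $\mathrm{Ran}(X)$; $\mathbf X=\mathbf x$ abbreviates $X_1=x_1\wedge\dots\wedge X_n=x_n$ ($\mathbf x\in\prod\mathrm{Ran}(X_i)$), inconsistent if it contains $X=x,X=x'$ with $x\ne x'$. $\mathcal{CO}[\sigma]$: $\alpha::=X=x\mid\neg\alpha\mid\alpha\wedge\alpha\mid\alpha\vee\alpha\mid\mathbf X=\mathbf x\;\Box\!\!\rightarrow\alpha$; $\alpha\supset\beta$ abbreviates $\neg\alpha\vee\beta$; $\bot$ abbreviates $X=x\wedge\neg(X=x)$. Systems of functions $\mathcal F$: for each $V\in\mathrm{En}(\mathcal F)\subseteq\mathrm{Dom}$ parents $PA^{\mathcal F}_V\subseteq\mathrm{Dom}\setminus\{V\}$ and $\mathcal F_V:\mathrm{Ran}(PA^{\mathcal F}_V)\to\mathrm{Ran}(V)$; $\mathrm{Ex}(\mathcal F)=\mathrm{Dom}\setminus\mathrm{En}(\mathcal F)$; only recursive (acyclic parent graph), forming the finite set $\mathbb F_\sigma$. An assignment $s$ is compatible with $\mathcal F$ if $s(V)=\mathcal F_V(s(PA^{\mathcal F}_V))$ for $V\in\mathrm{En}(\mathcal F)$.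 A generalized causal team is a set $T$ of compatible pairs $(s,\mathcal F)$ with $\mathcal F\in\mathbb F_\sigma$; causal subteams are subsets; $T^-=\{s:(s,\mathcal F)\in T\}$. For consistent $\mathbf X=\mathbf x$: $\mathcal F_{\mathbf X=\mathbf x}$ restricts $\mathcal F$ to $\mathrm{En}(\mathcal F)\setminus\mathbf X$; $s^{\mathcal F}_{\mathbf X=\mathbf x}$: $X_i\mapsto x_i$, $V\mapsto s(V)$ on $\mathrm{Ex}(\mathcal F)\setminus\mathbf X$, $V\mapsto\mathcal F_V(s^{\mathcal F}_{\mathbf X=\mathbf x}(PA^{\mathcal F}_V))$ on $\mathrm{En}(\mathcal F)\setminus\mathbf X$; $T_{\mathbf X=\mathbf x}=\{(s^{\mathcal F}_{\mathbf X=\mathbf x},\mathcal F_{\mathbf X=\mathbf x}):(s,\mathcal F)\in T\}$. $\models^g$: $T\models X=x$ iff $s(X)=x$ for all $s\in T^-$; $T\models\neg\alpha$ iff $\{(s,\mathcal F)\}\not\models\alpha$ for all $(s,\mathcal F)\in T$; $\wedge$ classical; $T\models\alpha\vee\beta$ iff $T=T_1\cup T_2$ with $T_1\models\alpha$, $T_2\models\beta$ (an empty $\vee$-disjunction is $\bot$); $T\models\mathbf X=\mathbf x\;\Box\!\!\rightarrow\alpha$ iff $\mathbf X=\mathbf x$ inconsistent or $T_{\mathbf X=\mathbf x}\models\alpha$. $\mathrm{Cn}(\mathcal F)=\{V\in\mathrm{En}(\mathcal F):\mathcal F_V\text{ constant}\}$; $\mathcal F_V\sim\mathcal G_V$ iff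 $\mathcal F_V(\mathbf x\mathbf y)=\mathcal G_V(\mathbf x\mathbf z)$ for all $\mathbf x\in\mathrm{Ran}(PA^{\mathcal F}_V\cap PA^{\mathcal G}_V)$, $\mathbf y\in\mathrm{Ran}(PA^{\mathcal F}_V\setminus PA^{\mathcal G}_V)$, $\mathbf z\in\mathrm{Ran}(PA^{\mathcal G}_V\setminus PA^{\mathcal F}_V)$; $\mathcal F\sim\mathcal G$ iff $\mathrm{En}(\mathcal F)\setminus\mathrm{Cn}(\mathcal F)=\mathrm{En}(\mathcal G)\setminus\mathrm{Cn}(\mathcal G)$ and $\mathcal F_V\sim\mathcal G_V$ for each such $V$. $T^{\mathcal F}=\{(s,\mathcal G)\in T:\mathcal G\sim\mathcal F\}$; $S\approx T$ iff $(S^{\mathcal F})^-=(T^{\mathcal F})^-$ for all $\mathcal F\in\mathbb F_\sigma$; $S\preccurlyeq T$ iff $S\approx R$ for some $R\subseteq T$ (and $\emptyset\preccurlyeq T$ always). $\Theta^{A}:=\bigvee_{s\in A}\bigwedge_{V\in\mathrm{Dom}}V=s(V)$ for a set $A$ of assignments ($\bot$ if $A=\emptyset$). With $\mathbf W_V$ listing $\mathrm{Dom}\setminus\{V\}$: $\Phi^{\mathcal F}:=\bigwedge_{V\in\mathrm{En}(\mathcal F)\setminus\mathrm{Cn}(\mathcal F)}\eta(V)\wedge\bigwedge_{V\notin\mathrm{En}(\mathcal F)\setminus\mathrm{Cn}(\mathcal F)}\xi(V)$, where $\eta(V)$ is the conjunction of all $(\mathbf W=\mathbf w\wedge PA^{\mathcal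 F}_V=\mathbf p)\;\Box\!\!\rightarrow V=\mathcal F_V(\mathbf p)$ ($\mathbf W$ listing $\mathrm{Dom}\setminus(PA^{\mathcal F}_V\cup\{V\})$, $\mathbf w\in\mathrm{Ran}(\mathbf W)$, $\mathbf p\in\mathrm{Ran}(PA^{\mathcal F}_V)$) and $\xi(V)$ is the conjunction of all $V=v\supset(\mathbf W_V=\mathbf w\;\Box\!\!\rightarrow V=v)$ ($v\in\mathrm{Ran}(V)$, $\mathbf w\in\mathrm{Ran}(\mathbf W_V)$). *)

theory Defs
  imports Main "HOL-Library.FuncSet"
begin

definition signature :: "'v set \<Rightarrow> ('v \<Rightarrow> 'a set) \<Rightarrow> bool" where
  "signature Dom Ran \<longleftrightarrow> finite Dom \<and> Dom \<noteq> {} \<and>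
     (\<forall>X\<in>Dom. finite (Ran X) \<and> Ran X \<noteq> {})"

text \<open>Assignments to a set A of variables (Ran(A)) are the extensional functions
  in PiE A Ran.  An assignment of the signature is an element of PiE Dom Ran.\<close>

text \<open>An antecedent X1=x1 and ... and Xn=xn is a list of variable/value pairs.\<close>

datatype ('v, 'a) form =
    Eq 'v 'a
  | Neg "('v, 'a) form"
  | And "('v, 'a) form" "('v, 'a) form"
  | Or "('v, 'a) form" "('v, 'a) form"
  | Cf "('v \<times> 'a) list" "('v, 'a) form"

definition consistent :: "('v \<times> 'a) list \<Rightarrow> bool" where
  "consistent Xs \<longleftrightarrow> (\<forall>X x x'. (X, x) \<in> set Xs \<and> (X, x') \<in> set Xs \<longrightarrow> x = x')"

definition Bot :: "'v set \<Rightarrow> ('v \<Rightarrow> 'a set) \<Rightarrow> ('v, 'a) form" where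
  "Bot Dom Ran = (let X = (SOME X. X \<in> Dom); x = (SOME x. x \<in> Ran X)
                  in And (Eq X x) (Neg (Eq X x)))"

definition Top :: "'v set \<Rightarrow> ('v \<Rightarrow> 'a set) \<Rightarrow> ('v, 'a) form" where
  "Top Dom Ran = Neg (Bot Dom Ran)"

fun BigOr :: "'v set \<Rightarrow> ('v \<Rightarrow> 'a set) \<Rightarrow> ('v, 'a) form list \<Rightarrow> ('v, 'a) form" where
  "BigOr Dom Ran [] = Bot Dom Ran"
| "BigOr Dom Ran [a] = a"
| "BigOr Dom Ran (a # as) = Or a (BigOr Dom Ran as)"

fun BigAnd :: "'v set \<Rightarrow> ('v \<Rightarrow> 'a set) \<Rightarrow> ('v, 'a) form list \<Rightarrow> ('v, 'a) form" where
  "BigAnd Dom Ran [] = Top Dom Ran"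
| "BigAnd Dom Ran [a] = a"
| "BigAnd Dom Ran (a # as) = And a (BigAnd Dom Ran as)"

definition list_of :: "'b set \<Rightarrow> 'b list" where
  "list_of A = (SOME xs. set xs = A \<and> distinct xs)"

definition ant :: "'v set \<Rightarrow> ('v \<Rightarrow> 'a) \<Rightarrow> ('v \<times> 'a) list" where
  "ant W w = map (\<lambda>X. (X, w X)) (list_of W)"

text \<open>A system of functions is a triple (En, PA, Fn): endogenous variables, parent
  sets, and for each endogenous V the function F_V, represented canonically as a map
  on full assignments that depends only on the values of the parents, and is
  'undefined' on arguments outside Ran(PA_V).  For non-endogenous V, PA V = {} and
  Fn V is constantly undefined (canonical representation).\<close>

type_synonym ('v, 'a) sys = "'v set \<times> ('v \<Rightarrow> 'v set) \<times> ('v \<Rightarrow> ('v \<Rightarrow> 'a) \<Rightarrow> 'a)"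

definition En :: "('v, 'a) sys \<Rightarrow> 'v set" where "En F = fst F"
definition PA :: "('v, 'a) sys \<Rightarrow> 'v \<Rightarrow> 'v set" where "PA F = fst (snd F)"
definition Fn :: "('v, 'a) sys \<Rightarrow> 'v \<Rightarrow> ('v \<Rightarrow> 'a) \<Rightarrow> 'a" where "Fn F = snd (snd F)"

definition parent_rel :: "('v, 'a) sys \<Rightarrow> ('v \<times> 'v) set" where
  "parent_rel F = {(W, V). V \<in> En F \<and> W \<in> PA F V}"

definition is_sys :: "'v set \<Rightarrow> ('v \<Rightarrow> 'a set) \<Rightarrow> ('v, 'a) sys \<Rightarrow> bool" where
  "is_sys Dom Ran F \<longleftrightarrow>
     En F \<subseteq> Dom \<and>
     (\<forall>V. V \<notin> En F \<longrightarrow> PA F V = {} \<and> Fn F V = (\<lambda>_. undefined)) \<and>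
     (\<forall>V\<in>En F. PA F V \<subseteq> Dom - {V} \<and>
        (\<forall>p. Fn F V p = (if (\<forall>W\<in>PA F V. p W \<in> Ran W)
                          then Fn F V (restrict p (PA F V)) else undefined)) \<and>
        (\<forall>p\<in>PiE (PA F V) Ran. Fn F V p \<in> Ran V)) \<and>
     acyclic (parent_rel F)"

definition Fsig :: "'v set \<Rightarrow> ('v \<Rightarrow> 'a set) \<Rightarrow> ('v, 'a) sys set" where
  "Fsig Dom Ran = {F. is_sys Dom Ran F}"

definition compatible :: "('v \<Rightarrow> 'a) \<Rightarrow> ('v, 'a) sys \<Rightarrow> bool" where
  "compatible s F \<longleftrightarrow> (\<forall>V\<in>En F. s V = Fn F V s)"

type_synonym ('v, 'a) team = "(('v \<Rightarrow> 'a) \<times> ('v, 'a) sys) set"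

definition gcteam :: "'v set \<Rightarrow> ('v \<Rightarrow> 'a set) \<Rightarrow> ('v, 'a) team \<Rightarrow> bool" where
  "gcteam Dom Ran T \<longleftrightarrow>
     (\<forall>(s, F)\<in>T. s \<in> PiE Dom Ran \<and> F \<in> Fsig Dom Ran \<and> compatible s F)"

definition team_minus :: "('v, 'a) team \<Rightarrow> ('v \<Rightarrow> 'a) set" where
  "team_minus T = fst ` T"

definition ivars :: "('v \<times> 'a) list \<Rightarrow> 'v set" where
  "ivars Xs = fst ` set Xs"

definition sys_do :: "('v, 'a) sys \<Rightarrow> ('v \<times> 'a) list \<Rightarrow> ('v, 'a) sys" where
  "sys_do F Xs =
     (En F - ivars Xs,
      \<lambda>V. if V \<in> En F - ivars Xs then PA F V else {},
      \<lambda>V. if V \<in> En F - ivars Xs then Fn F V else (\<lambda>_. undefined))"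

text \<open>s^F_{X=x}: the unique assignment satisfying the recursive clauses of the
  definition (unique since F is recursive).\<close>

definition asg_do :: "('v, 'a) sys \<Rightarrow> ('v \<times> 'a) list \<Rightarrow> ('v \<Rightarrow> 'a) \<Rightarrow> ('v \<Rightarrow> 'a)" where
  "asg_do F Xs s = (THE s'.
     (\<forall>V. (V \<in> ivars Xs \<longrightarrow> s' V = the (map_of Xs V)) \<and>
          (V \<notin> ivars Xs \<and> V \<notin> En F \<longrightarrow> s' V = s V) \<and>
          (V \<notin> ivars Xs \<and> V \<in> En F \<longrightarrow> s' V = Fn F V s')))"

definition team_do :: "('v, 'a) team \<Rightarrow> ('v \<times> 'a) list \<Rightarrow> ('v, 'a) team" where
  "team_do T Xs = (\<lambda>(s, F). (asg_do F Xs s, sys_do F Xs)) ` T"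

fun sat :: "('v, 'a) team \<Rightarrow> ('v, 'a) form \<Rightarrow> bool" where
  "sat T (Eq X x) = (\<forall>s\<in>team_minus T. s X = x)"
| "sat T (Neg \<alpha>) = (\<forall>p\<in>T. \<not> sat {p} \<alpha>)"
| "sat T (And \<alpha> \<beta>) = (sat T \<alpha> \<and> sat T \<beta>)"
| "sat T (Or \<alpha> \<beta>) = (\<exists>T1 T2. T = T1 \<union> T2 \<and> sat T1 \<alpha> \<and> sat T2 \<beta>)"
| "sat T (Cf Xs \<alpha>) = (\<not> consistent Xs \<or> sat (team_do T Xs) \<alpha>)"

definition Cn :: "('v \<Rightarrow> 'a set) \<Rightarrow> ('v, 'a) sys \<Rightarrow> 'v set" where
  "Cn Ran F = {V \<in> En F. \<exists>c. \<forall>p\<in>PiE (PA F V) Ran. Fn F V p = c}"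

definition fn_sim :: "('v \<Rightarrow> 'a set) \<Rightarrow> ('v, 'a) sys \<Rightarrow> ('v, 'a) sys \<Rightarrow> 'v \<Rightarrow> bool" where
  "fn_sim Ran F G V \<longleftrightarrow>
     (\<forall>p\<in>PiE (PA F V) Ran. \<forall>q\<in>PiE (PA G V) Ran.
        (\<forall>W\<in>PA F V \<inter> PA G V. p W = q W) \<longrightarrow> Fn F V p = Fn G V q)"

definition sys_sim :: "('v \<Rightarrow> 'a set) \<Rightarrow> ('v, 'a) sys \<Rightarrow> ('v, 'a) sys \<Rightarrow> bool" where
  "sys_sim Ran F G \<longleftrightarrow> En F - Cn Ran F = En G - Cn Ran G \<and>
     (\<forall>V\<in>En F - Cn Ran F. fn_sim Ran F G V)"

definition team_F :: "('v \<Rightarrow> 'a set) \<Rightarrow> ('v, 'a) team \<Rightarrow> ('v, 'a) sys \<Rightarrow> ('v, 'a) team" where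
  "team_F Ran T F = {(s, G) \<in> T. sys_sim Ran G F}"

definition team_approx :: "'v set \<Rightarrow> ('v \<Rightarrow> 'a set) \<Rightarrow> ('v, 'a) team \<Rightarrow> ('v, 'a) team \<Rightarrow> bool" where
  "team_approx Dom Ran S T \<longleftrightarrow>
     (\<forall>F\<in>Fsig Dom Ran. team_minus (team_F Ran S F) = team_minus (team_F Ran T F))"

definition team_preceq :: "'v set \<Rightarrow> ('v \<Rightarrow> 'a set) \<Rightarrow> ('v, 'a) team \<Rightarrow> ('v, 'a) team \<Rightarrow> bool" where
  "team_preceq Dom Ran S T \<longleftrightarrow> S = {} \<or> (\<exists>R\<subseteq>T. team_approx Dom Ran S R)"

definition Theta :: "'v set \<Rightarrow> ('v \<Rightarrow> 'a set) \<Rightarrow> ('v \<Rightarrow> 'a) set \<Rightarrow> ('v, 'a) form" where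
  "Theta Dom Ran A =
     BigOr Dom Ran (map (\<lambda>s. BigAnd Dom Ran (map (\<lambda>V. Eq V (s V)) (list_of Dom))) (list_of A))"

definition eta :: "'v set \<Rightarrow> ('v \<Rightarrow> 'a set) \<Rightarrow> ('v, 'a) sys \<Rightarrow> 'v \<Rightarrow> ('v, 'a) form" where
  "eta Dom Ran F V =
     (let W = Dom - (PA F V \<union> {V}) in
      BigAnd Dom Ran (map (\<lambda>(w, p). Cf (ant W w @ ant (PA F V) p) (Eq V (Fn F V p)))
                       (list_of (PiE W Ran \<times> PiE (PA F V) Ran))))"

definition xi :: "'v set \<Rightarrow> ('v \<Rightarrow> 'a set) \<Rightarrow> 'v \<Rightarrow> ('v, 'a) form" where
  "xi Dom Ran V =
     (let W = Dom - {V} in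
      BigAnd Dom Ran (map (\<lambda>(v, w). Or (Neg (Eq V v)) (Cf (ant W w) (Eq V v)))
                       (list_of (Ran V \<times> PiE W Ran))))"

definition Phi :: "'v set \<Rightarrow> ('v \<Rightarrow> 'a set) \<Rightarrow> ('v, 'a) sys \<Rightarrow> ('v, 'a) form" where
  "Phi Dom Ran F =
     And (BigAnd Dom Ran (map (eta Dom Ran F) (list_of (En F - Cn Ran F))))
         (BigAnd Dom Ran (map (xi Dom Ran) (list_of (Dom - (En F - Cn Ran F)))))"

end

theory Submission
  imports Defs
begin

(* Satisfaction is flat: a team satisfies a formula iff each of its pairs (s, G) does.
   For a single pair, Theta A holds iff s is in A, and Phi F holds iff G ~ F.  Indeed,
   for V endogenous and non-constant in F, eta V intervenes on every variable except V,
   so it reads off G_V on all of Ran(Dom - {V}) and forces it to coincide with F_V; and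
   xi V says that V keeps its value under all those interventions, which for a compatible
   pair means that V is exogenous or constant in G.  Hence S satisfies the disjunction iff
   every (s, G) in S has a partner (s, H) in T with H ~ G.  As ~ is an equivalence
   relation, this is exactly team_preceq S T, witnessed by the subteam of these partners. *)

lemma list_of_set: "finite A \<Longrightarrow> set (list_of A) = A"
  unfolding list_of_def by (metis (mono_tags, lifting) finite_distinct_list someI_ex)

section \<open>Flatness of the semantics\<close>

lemma sat_Or_if_flat:
  assumes flat_a: "\<And>T. sat T a \<longleftrightarrow> (\<forall>p\<in>T. sat {p} a)"
    and flat_b: "\<And>T. sat T b \<longleftrightarrow> (\<forall>p\<in>T. sat {p} b)"
  shows "sat T (Or a b) \<longleftrightarrow> (\<forall>p\<in>T. sat {p} a \<or> sat {p} b)"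
proof
  assume "sat T (Or a b)"
  then obtain T1 T2 where "T = T1 \<union> T2" "sat T1 a" "sat T2 b" by auto
  then show "\<forall>p\<in>T. sat {p} a \<or> sat {p} b" using flat_a[of T1] flat_b[of T2] by blast
next
  assume "\<forall>p\<in>T. sat {p} a \<or> sat {p} b"
  then have "T = {p\<in>T. sat {p} a} \<union> {p\<in>T. sat {p} b}" by blast
  moreover have "sat {p\<in>T. sat {p} a} a" "sat {p\<in>T. sat {p} b} b"
    using flat_a flat_b by blast+
  ultimately show "sat T (Or a b)" by (simp only: sat.simps) blast
qed

lemma sat_iff_singletons: "sat T \<phi> \<longleftrightarrow> (\<forall>p\<in>T. sat {p} \<phi>)"
proof (induction \<phi> arbitrary: T)
  case (Eq X x)
  show ?case by (auto simp: team_minus_def)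
next
  case (Neg \<phi>)
  show ?case by simp
next
  case (And a b)
  show ?case by (simp only: sat.simps And.IH[of T]) blast
next
  case (Or a b)
  show ?case by (simp add: sat_Or_if_flat[OF Or.IH] del: sat.simps(4))
next
  case (Cf Xs \<phi>)
  show ?case by (simp only: sat.simps Cf.IH[of "team_do T Xs"]) (auto simp: team_do_def)
qed

lemma sat_Or_iff: "sat T (Or a b) \<longleftrightarrow> (\<forall>p\<in>T. sat {p} a \<or> sat {p} b)"
  by (rule sat_Or_if_flat) (rule sat_iff_singletons)+

lemma sat_singleton_Bot: "\<not> sat {p} (Bot Dom Ran)"
  by (simp add: Bot_def Let_def team_minus_def)

lemma sat_Top: "sat T (Top Dom Ran)"
  by (simp add: Top_def sat_singleton_Bot)

lemma sat_singleton_BigOr: "sat {p} (BigOr Dom Ran as) \<longleftrightarrow> (\<exists>a\<in>set as. sat {p} a)"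
  by (induction Dom Ran as rule: BigOr.induct)
    (simp_all add: sat_singleton_Bot sat_Or_iff del: sat.simps(4))

lemma sat_BigAnd: "sat T (BigAnd Dom Ran as) \<longleftrightarrow> (\<forall>a\<in>set as. sat T a)"
  by (induction Dom Ran as rule: BigAnd.induct) (auto simp: sat_Top)

lemma sat_singleton_Eq: "sat {(s, G)} (Eq V c) \<longleftrightarrow> s V = c"
  by (simp add: team_minus_def)

lemma sat_singleton_Cf:
  "sat {(s, G)} (Cf Xs \<phi>) \<longleftrightarrow> \<not> consistent Xs \<or> sat {(asg_do G Xs s, sys_do G Xs)} \<phi>"
  by (simp add: team_do_def)

lemma finite_PiE_signature: "signature Dom Ran \<Longrightarrow> A \<subseteq> Dom \<Longrightarrow> finite (PiE A Ran)"
  unfolding signature_def by (intro finite_PiE) (auto intro: finite_subset)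

lemma PiE_extend:
  assumes "signature Dom Ran" "A \<subseteq> B" "B \<subseteq> Dom" "\<And>X. X \<in> A \<Longrightarrow> f X \<in> Ran X"
  shows "\<exists>r\<in>PiE B Ran. \<forall>X\<in>A. r X = f X"
proof (intro bexI)
  let ?r = "\<lambda>X\<in>B. if X \<in> A then f X else (SOME x. x \<in> Ran X)"
  have "Ran X \<noteq> {}" if "X \<in> B" for X
    using assms(1,3) that unfolding signature_def by auto
  then show "?r \<in> PiE B Ran" using assms(4) by (auto simp: some_in_eq)
  show "\<forall>X\<in>A. ?r X = f X" using assms(2) by auto
qed

lemma ball_PiE_Un_iff:
  assumes "A \<inter> B = {}"
  shows "(\<forall>w\<in>PiE A S. \<forall>p\<in>PiE B S. Q (\<lambda>X. if X \<in> B then p X else w X))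
     \<longleftrightarrow> (\<forall>r\<in>PiE (A \<union> B) S. Q r)"
proof
  assume Q: "\<forall>w\<in>PiE A S. \<forall>p\<in>PiE B S. Q (\<lambda>X. if X \<in> B then p X else w X)"
  show "\<forall>r\<in>PiE (A \<union> B) S. Q r"
  proof
    fix r assume r: "r \<in> PiE (A \<union> B) S"
    have "restrict r A \<in> PiE A S" "restrict r B \<in> PiE B S"
      using r by (auto simp: PiE_iff)
    then have "Q (\<lambda>X. if X \<in> B then restrict r B X else restrict r A X)"
      by (rule Q[rule_format])
    moreover have "(\<lambda>X. if X \<in> B then restrict r B X else restrict r A X) = r"
    proof
      fix X show "(if X \<in> B then restrict r B X else restrict r A X) = r X"
        using PiE_arb[OF r, of X] by auto
    qed
    ultimately show "Q r" by simp
  qed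
next
  assume R: "\<forall>r\<in>PiE (A \<union> B) S. Q r"
  show "\<forall>w\<in>PiE A S. \<forall>p\<in>PiE B S. Q (\<lambda>X. if X \<in> B then p X else w X)"
  proof (intro ballI)
    fix w p assume "w \<in> PiE A S" "p \<in> PiE B S"
    then have "(\<lambda>X. if X \<in> B then p X else w X) \<in> PiE (A \<union> B) S"
      by (auto simp: PiE_iff extensional_def)
    then show "Q (\<lambda>X. if X \<in> B then p X else w X)" by (rule R[rule_format])
  qed
qed

lemma is_sys_En_subset: "is_sys Dom Ran G \<Longrightarrow> En G \<subseteq> Dom"
  unfolding is_sys_def by auto

lemma is_sys_PA_subset: "is_sys Dom Ran G \<Longrightarrow> PA G V \<subseteq> Dom - {V}"
  unfolding is_sys_def by (cases "V \<in> En G") auto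

lemma is_sys_not_En:
  "is_sys Dom Ran G \<Longrightarrow> V \<notin> En G \<Longrightarrow> PA G V = {} \<and> Fn G V = (\<lambda>_. undefined)"
  unfolding is_sys_def by auto

lemma is_sys_Fn_eq:
  "is_sys Dom Ran G \<Longrightarrow> V \<in> En G \<Longrightarrow>
   Fn G V p = (if \<forall>W\<in>PA G V. p W \<in> Ran W then Fn G V (restrict p (PA G V)) else undefined)"
  unfolding is_sys_def by blast

lemma Fn_cong:
  assumes G: "is_sys Dom Ran G" and eq: "\<And>X. X \<in> PA G V \<Longrightarrow> f X = g X"
  shows "Fn G V f = Fn G V g"
proof (cases "V \<in> En G")
  case True
  have "restrict f (PA G V) = restrict g (PA G V)" using eq by auto
  then show ?thesis
    using is_sys_Fn_eq[OF G True, of f] is_sys_Fn_eq[OF G True, of g] eq by auto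
next
  case False
  then show ?thesis using is_sys_not_En[OF G] by simp
qed

lemma Fn_in_Ran:
  assumes G: "is_sys Dom Ran G" and V: "V \<in> En G" and f: "\<And>X. X \<in> PA G V \<Longrightarrow> f X \<in> Ran X"
  shows "Fn G V f \<in> Ran V"
proof -
  have "restrict f (PA G V) \<in> PiE (PA G V) Ran" using f by auto
  then have "Fn G V (restrict f (PA G V)) \<in> Ran V" using G V unfolding is_sys_def by blast
  moreover have "Fn G V f = Fn G V (restrict f (PA G V))" by (rule Fn_cong[OF G]) simp
  ultimately show ?thesis by simp
qed

lemma Fn_in_Ran_or_undefined:
  assumes G: "is_sys Dom Ran G"
  shows "Fn G V p \<in> insert undefined (Ran V)"
proof (cases "V \<in> En G")
  case True
  then show ?thesis using is_sys_Fn_eq[OF G True, of p] Fn_in_Ran[OF G True, of p] by auto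
next
  case False
  then show ?thesis using is_sys_not_En[OF G] by simp
qed

lemma is_sys_eqI:
  assumes F: "is_sys Dom Ran F" and G: "is_sys Dom Ran G" and En: "En F = En G"
    and PA: "\<And>V. V \<in> En F \<Longrightarrow> PA F V = PA G V"
    and Fn: "\<And>V p. V \<in> En F \<Longrightarrow> p \<in> PiE (PA F V) Ran \<Longrightarrow> Fn F V p = Fn G V p"
  shows "F = G"
proof -
  have "PA F V = PA G V \<and> Fn F V = Fn G V" for V
  proof (cases "V \<in> En F")
    case True
    have "Fn F V p = Fn G V p" for p
      using is_sys_Fn_eq[OF F True, of p] is_sys_Fn_eq[OF G, of V p] True En PA[OF True]
        Fn[OF True, of "restrict p (PA F V)"] by auto
    then show ?thesis using PA True by auto
  next
    case False
    then show ?thesis using is_sys_not_En[OF F] is_sys_not_En[OF G] En by auto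
  qed
  then show ?thesis using En unfolding En_def PA_def Fn_def by (simp add: prod_eq_iff fun_eq_iff)
qed

lemma finite_Fsig:
  fixes Dom :: "'v set" and Ran :: "'v \<Rightarrow> 'a set"
  assumes sig: "signature Dom Ran"
  shows "finite (Fsig Dom Ran)"
proof -
  define U where "U = (\<Union>B\<in>Pow Dom. PiE B Ran)"
  define C where "C = (\<Union>X\<in>Dom. insert undefined (Ran X))"
  define code :: "('v, 'a) sys \<Rightarrow> _"
    where "code F = (En F, \<lambda>V\<in>Dom. PA F V, \<lambda>V\<in>Dom. \<lambda>p\<in>U. Fn F V p)" for F
  define K where "K = Pow Dom \<times> PiE Dom (\<lambda>_. Pow Dom) \<times> PiE Dom (\<lambda>_. PiE U (\<lambda>_. C))"
  have finD: "finite Dom" and finR: "\<forall>X\<in>Dom. finite (Ran X)"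
    using sig unfolding signature_def by auto
  have "finite U" unfolding U_def using finD finite_PiE_signature[OF sig] by auto
  moreover have "finite C" unfolding C_def using finD finR by auto
  ultimately have "finite K" unfolding K_def using finD
    by (intro finite_cartesian_product finite_PiE) auto
  moreover have "code F \<in> K" if "F \<in> Fsig Dom Ran" for F
  proof -
    from that have F: "is_sys Dom Ran F" unfolding Fsig_def by simp
    have "En F \<in> Pow Dom" using is_sys_En_subset[OF F] by simp
    moreover have "(\<lambda>V\<in>Dom. PA F V) \<in> PiE Dom (\<lambda>_. Pow Dom)"
      using is_sys_PA_subset[OF F] by auto
    moreover have "(\<lambda>V\<in>Dom. \<lambda>p\<in>U. Fn F V p) \<in> PiE Dom (\<lambda>_. PiE U (\<lambda>_. C))"
      using Fn_in_Ran_or_undefined[OF F] unfolding C_def by fastforce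
    ultimately show ?thesis unfolding K_def code_def by simp
  qed
  moreover have "inj_on code (Fsig Dom Ran)"
  proof (rule inj_onI)
    fix F G assume "F \<in> Fsig Dom Ran" "G \<in> Fsig Dom Ran" and eq: "code F = code G"
    then have F: "is_sys Dom Ran F" and G: "is_sys Dom Ran G" unfolding Fsig_def by auto
    have VD: "V \<in> Dom" if "V \<in> En F" for V using that is_sys_En_subset[OF F] by auto
    have En: "En F = En G" and PA: "(\<lambda>V\<in>Dom. PA F V) = (\<lambda>V\<in>Dom. PA G V)"
      and Fn: "(\<lambda>V\<in>Dom. \<lambda>p\<in>U. Fn F V p) = (\<lambda>V\<in>Dom. \<lambda>p\<in>U. Fn G V p)"
      using eq unfolding code_def by simp_all
    show "F = G"
    proof (rule is_sys_eqI[OF F G En])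
      show "PA F V = PA G V" if "V \<in> En F" for V
        using fun_cong[OF PA, of V] VD[OF that] by simp
      show "Fn F V p = Fn G V p" if "V \<in> En F" "p \<in> PiE (PA F V) Ran" for V p
      proof -
        have "p \<in> U" using that(2) is_sys_PA_subset[OF F, of V] unfolding U_def by auto
        then show ?thesis using fun_cong[OF fun_cong[OF Fn, of V], of p] VD[OF that(1)] by simp
      qed
    qed
  qed
  ultimately show ?thesis by (meson finite_imageD finite_subset image_subsetI)
qed

lemma Fn_restrict_PA: "is_sys Dom Ran F \<Longrightarrow> Fn F V (restrict r (PA F V)) = Fn F V r"
  by (rule Fn_cong) auto

lemma Cn_iff:
  assumes sig: "signature Dom Ran" and F: "is_sys Dom Ran F"
  shows "V \<in> Cn Ran F \<longleftrightarrow> V \<in> En F \<and> (\<exists>c. \<forall>r\<in>PiE (Dom - {V}) Ran. Fn F V r = c)"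
proof -
  have "(\<forall>p\<in>PiE (PA F V) Ran. Fn F V p = c) \<longleftrightarrow> (\<forall>r\<in>PiE (Dom - {V}) Ran. Fn F V r = c)" for c
  proof
    assume const: "\<forall>p\<in>PiE (PA F V) Ran. Fn F V p = c"
    show "\<forall>r\<in>PiE (Dom - {V}) Ran. Fn F V r = c"
    proof
      fix r assume "r \<in> PiE (Dom - {V}) Ran"
      then have "restrict r (PA F V) \<in> PiE (PA F V) Ran"
        using is_sys_PA_subset[OF F, of V] by (auto simp: PiE_iff)
      then show "Fn F V r = c" using const Fn_restrict_PA[OF F, of V r] by simp
    qed
  next
    assume const: "\<forall>r\<in>PiE (Dom - {V}) Ran. Fn F V r = c"
    show "\<forall>p\<in>PiE (PA F V) Ran. Fn F V p = c"
    proof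
      fix p assume "p \<in> PiE (PA F V) Ran"
      then obtain r where "r \<in> PiE (Dom - {V}) Ran" "\<forall>X\<in>PA F V. r X = p X"
        using PiE_extend[OF sig is_sys_PA_subset[OF F, of V] Diff_subset, of p] by (auto simp: PiE_iff)
      then show "Fn F V p = c" using const Fn_cong[OF F, of V r p] by auto
    qed
  qed
  then show ?thesis unfolding Cn_def by auto
qed

lemma fn_sim_iff:
  assumes sig: "signature Dom Ran" and F: "is_sys Dom Ran F" and G: "is_sys Dom Ran G"
  shows "fn_sim Ran F G V \<longleftrightarrow> (\<forall>r\<in>PiE (Dom - {V}) Ran. Fn F V r = Fn G V r)"
proof
  assume sim: "fn_sim Ran F G V"
  show "\<forall>r\<in>PiE (Dom - {V}) Ran. Fn F V r = Fn G V r"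
  proof
    fix r assume r: "r \<in> PiE (Dom - {V}) Ran"
    have "restrict r (PA F V) \<in> PiE (PA F V) Ran" "restrict r (PA G V) \<in> PiE (PA G V) Ran"
      using r is_sys_PA_subset[OF F, of V] is_sys_PA_subset[OF G, of V] by (auto simp: PiE_iff)
    then have "Fn F V (restrict r (PA F V)) = Fn G V (restrict r (PA G V))"
      using sim[unfolded fn_sim_def, rule_format] by simp
    then show "Fn F V r = Fn G V r" by (simp only: Fn_restrict_PA[OF F] Fn_restrict_PA[OF G])
  qed
next
  assume eq: "\<forall>r\<in>PiE (Dom - {V}) Ran. Fn F V r = Fn G V r"
  show "fn_sim Ran F G V" unfolding fn_sim_def
  proof (intro ballI impI)
    fix p q assume p: "p \<in> PiE (PA F V) Ran" and q: "q \<in> PiE (PA G V) Ran"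
      and pq: "\<forall>W\<in>PA F V \<inter> PA G V. p W = q W"
    have PA: "PA F V \<union> PA G V \<subseteq> Dom - {V}"
      using is_sys_PA_subset[OF F, of V] is_sys_PA_subset[OF G, of V] by blast
    have "(if X \<in> PA F V then p X else q X) \<in> Ran X" if "X \<in> PA F V \<union> PA G V" for X
      using that p q by auto
    from PiE_extend[OF sig PA Diff_subset this] obtain r where r: "r \<in> PiE (Dom - {V}) Ran"
      and rpq: "\<forall>X\<in>PA F V \<union> PA G V. r X = (if X \<in> PA F V then p X else q X)"
      by blast
    have "Fn F V p = Fn F V r" by (rule Fn_cong[OF F]) (use rpq in simp)
    also have "\<dots> = Fn G V r" using eq r by blast
    also have "\<dots> = Fn G V q" by (rule Fn_cong[OF G]) (use rpq pq in auto)
    finally show "Fn F V p = Fn G V q" .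
  qed
qed

lemma sys_sim_iff:
  assumes "signature Dom Ran" "is_sys Dom Ran F" "is_sys Dom Ran G"
  shows "sys_sim Ran F G \<longleftrightarrow> En F - Cn Ran F = En G - Cn Ran G \<and>
    (\<forall>V\<in>En F - Cn Ran F. \<forall>r\<in>PiE (Dom - {V}) Ran. Fn F V r = Fn G V r)"
  by (simp only: sys_sim_def fn_sim_iff[OF assms])

lemma sys_sim_refl: "sys_sim Ran F F"
  unfolding sys_sim_def fn_sim_def by (metis Int_absorb PiE_ext)

lemma sys_sim_sym: "sys_sim Ran F G \<Longrightarrow> sys_sim Ran G F"
  unfolding sys_sim_def fn_sim_def by (metis Int_commute)

lemma sys_sim_trans:
  assumes "signature Dom Ran" "is_sys Dom Ran F" "is_sys Dom Ran G" "is_sys Dom Ran H"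
  shows "sys_sim Ran F G \<Longrightarrow> sys_sim Ran G H \<Longrightarrow> sys_sim Ran F H"
  using sys_sim_iff[of Dom Ran F G] sys_sim_iff[of Dom Ran G H] sys_sim_iff[of Dom Ran F H] assms
  by auto

section \<open>Characteristic formulas\<close>

lemma asg_do_all_but:
  assumes G: "is_sys Dom Ran G" and V: "V \<in> Dom" and iv: "ivars Xs = Dom - {V}"
    and val: "\<And>X. X \<in> Dom - {V} \<Longrightarrow> map_of Xs X = Some (f X)"
  shows "asg_do G Xs s V = (if V \<in> En G then Fn G V f else s V)"
proof -
  \<comment> \<open>With all variables but V fixed, the intervened assignment is explicit.\<close>
  define t where "t X = (if X \<in> Dom - {V} then f X
    else if X = V \<and> V \<in> En G then Fn G V f else s X)" for X
  let ?P = "\<lambda>t'. \<forall>U. (U \<in> ivars Xs \<longrightarrow> t' U = the (map_of Xs U)) \<and>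
      (U \<notin> ivars Xs \<and> U \<notin> En G \<longrightarrow> t' U = s U) \<and>
      (U \<notin> ivars Xs \<and> U \<in> En G \<longrightarrow> t' U = Fn G U t')"
  have En: "U = V" if "U \<in> En G" "U \<notin> Dom - {V}" for U
    using is_sys_En_subset[OF G] that by auto
  have Fn_V: "Fn G V t' = Fn G V f" if "\<And>X. X \<in> Dom - {V} \<Longrightarrow> t' X = f X" for t'
    using Fn_cong[OF G, of V t' f] is_sys_PA_subset[OF G, of V] that by auto
  have "?P t"
  proof (intro allI conjI impI)
    fix U
    show "t U = the (map_of Xs U)" if "U \<in> ivars Xs" using that iv val unfolding t_def by simp
    show "t U = s U" if "U \<notin> ivars Xs \<and> U \<notin> En G" using that iv unfolding t_def by auto
    show "t U = Fn G U t" if "U \<notin> ivars Xs \<and> U \<in> En G"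
      using that iv En[of U] Fn_V[of t] unfolding t_def by auto
  qed
  moreover have "t' = t" if P: "?P t'" for t'
  proof
    fix U
    have agree: "t' X = f X" if "X \<in> Dom - {V}" for X
      using P[rule_format, of X] iv val[OF that] that by simp
    show "t' U = t U"
    proof (cases "U \<in> Dom - {V}")
      case True
      then show ?thesis using agree unfolding t_def by simp
    next
      case False
      then have U: "U \<notin> ivars Xs" using iv by simp
      consider "U = V" "V \<in> En G" | "U \<notin> En G" using En[OF _ False] by blast
      then show ?thesis
      proof cases
        case 1
        then have "t' U = Fn G V f" using P[rule_format, of U] U Fn_V[of t', OF agree] by simp
        then show ?thesis using 1 unfolding t_def by simp
      next
        case 2
        then show ?thesis using P[rule_format, of U] U False unfolding t_def by auto
      qed
    qed
  qed
  ultimately have "asg_do G Xs s = t" unfolding asg_do_def by (rule the_equality)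
  then show ?thesis using V unfolding t_def by simp
qed

lemma sat_singleton_Cf_all_but:
  assumes G: "is_sys Dom Ran G" and V: "V \<in> Dom" and xs: "set xs = Dom - {V}"
  shows "sat {(s, G)} (Cf (map (\<lambda>X. (X, f X)) xs) (Eq V c))
     \<longleftrightarrow> (if V \<in> En G then Fn G V f else s V) = c"
proof -
  have "consistent (map (\<lambda>X. (X, f X)) xs)" unfolding consistent_def by auto
  moreover have "asg_do G (map (\<lambda>X. (X, f X)) xs) s V = (if V \<in> En G then Fn G V f else s V)"
    using xs by (intro asg_do_all_but[OF G V]) (auto simp: ivars_def image_image map_of_map_restrict)
  ultimately show ?thesis by (simp only: sat_singleton_Cf sat_singleton_Eq) simp
qed

lemma sat_singleton_Theta:
  assumes sig: "signature Dom Ran" and A: "finite A" "A \<subseteq> PiE Dom Ran" and s: "s \<in> PiE Dom Ran"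
  shows "sat {(s, G)} (Theta Dom Ran A) \<longleftrightarrow> s \<in> A"
proof -
  have finD: "finite Dom" using sig unfolding signature_def by simp
  have "sat {(s, G)} (Theta Dom Ran A) \<longleftrightarrow> (\<exists>t\<in>A. \<forall>V\<in>Dom. s V = t V)"
    unfolding Theta_def sat_singleton_BigOr set_map list_of_set[OF A(1)]
    by (simp add: sat_BigAnd list_of_set[OF finD] sat_singleton_Eq del: sat.simps)
  also have "\<dots> \<longleftrightarrow> s \<in> A"
  proof
    assume "\<exists>t\<in>A. \<forall>V\<in>Dom. s V = t V"
    then obtain t where "t \<in> A" "\<forall>V\<in>Dom. s V = t V" by blast
    then show "s \<in> A" using PiE_ext[OF s, of t] A(2) by auto
  qed auto
  finally show ?thesis .
qed

lemma Cn_iff_compatible: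
  assumes sig: "signature Dom Ran" and G: "is_sys Dom Ran G" and s: "s \<in> PiE Dom Ran"
    and comp: "compatible s G" and V: "V \<in> En G"
  shows "V \<in> Cn Ran G \<longleftrightarrow> (\<forall>r\<in>PiE (Dom - {V}) Ran. Fn G V r = s V)"
proof -
  have "restrict s (Dom - {V}) \<in> PiE (Dom - {V}) Ran" using s by (auto simp: PiE_iff)
  moreover have "Fn G V (restrict s (Dom - {V})) = Fn G V s"
    by (rule Fn_cong[OF G]) (use is_sys_PA_subset[OF G, of V] in auto)
  moreover have "Fn G V s = s V" using comp V unfolding compatible_def by simp
  ultimately show ?thesis unfolding Cn_iff[OF sig G] using V by metis
qed

lemma sat_singleton_xi:
  assumes sig: "signature Dom Ran" and G: "is_sys Dom Ran G" and V: "V \<in> Dom"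
    and s: "s \<in> PiE Dom Ran" and comp: "compatible s G"
  shows "sat {(s, G)} (xi Dom Ran V) \<longleftrightarrow> V \<notin> En G - Cn Ran G"
proof -
  let ?val = "\<lambda>r. if V \<in> En G then Fn G V r else s V"
  have finD: "finite Dom" using sig unfolding signature_def by simp
  have fin: "finite (Ran V \<times> PiE (Dom - {V}) Ran)"
    using sig V finite_PiE_signature[OF sig, of "Dom - {V}"] unfolding signature_def by auto
  have conjunct: "sat {(s, G)} (Or (Neg (Eq V v)) (Cf (ant (Dom - {V}) w) (Eq V v)))
      \<longleftrightarrow> s V \<noteq> v \<or> ?val w = v" for v w
    by (simp add: sat_Or_iff ant_def team_minus_def
        sat_singleton_Cf_all_but[OF G V list_of_set[OF finite_Diff[OF finD]]] del: sat.simps(4,5))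
  have "sat {(s, G)} (xi Dom Ran V) \<longleftrightarrow>
      (\<forall>v\<in>Ran V. \<forall>w\<in>PiE (Dom - {V}) Ran. s V \<noteq> v \<or> ?val w = v)"
    unfolding xi_def Let_def sat_BigAnd set_map list_of_set[OF fin]
    by (simp add: conjunct del: sat.simps(4,5))
  also have "\<dots> \<longleftrightarrow> (\<forall>w\<in>PiE (Dom - {V}) Ran. ?val w = s V)"
    using s V by (auto simp: PiE_iff)
  also have "\<dots> \<longleftrightarrow> V \<notin> En G - Cn Ran G"
    using Cn_iff_compatible[OF sig G s comp] by auto
  finally show ?thesis .
qed

lemma sat_singleton_eta:
  fixes Dom :: "'v set" and Ran :: "'v \<Rightarrow> 'a set"
  assumes sig: "signature Dom Ran" and G: "is_sys Dom Ran G" and F: "is_sys Dom Ran F"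
    and V: "V \<in> En F - Cn Ran F"
  shows "sat {(s, G)} (eta Dom Ran F V)
    \<longleftrightarrow> V \<in> En G \<and> (\<forall>r\<in>PiE (Dom - {V}) Ran. Fn G V r = Fn F V r)"
proof -
  let ?val = "\<lambda>r. if V \<in> En G then Fn G V r else s V"
  define W where "W = Dom - (PA F V \<union> {V})"
  define m where "m w p = (\<lambda>X. if X \<in> PA F V then p X else w X)" for w p :: "'v \<Rightarrow> 'a"
  have finD: "finite Dom" using sig unfolding signature_def by simp
  have VD: "V \<in> Dom" using V is_sys_En_subset[OF F] by auto
  have PA: "PA F V \<subseteq> Dom - {V}" using is_sys_PA_subset[OF F] .
  have WP: "W \<inter> PA F V = {}" "W \<union> PA F V = Dom - {V}" using PA unfolding W_def by auto
  have "finite W" "finite (PA F V)" using finD PA unfolding W_def by (auto intro: finite_subset)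
  then have lists: "set (list_of W) = W" "set (list_of (PA F V)) = PA F V"
    by (simp_all add: list_of_set)
  have "W \<subseteq> Dom" "PA F V \<subseteq> Dom" using PA unfolding W_def by auto
  then have fin: "finite (PiE W Ran \<times> PiE (PA F V) Ran)"
    using finite_PiE_signature[OF sig] by blast
  have conjunct: "sat {(s, G)} (Cf (ant W w @ ant (PA F V) p) (Eq V (Fn F V p)))
      \<longleftrightarrow> ?val (m w p) = Fn F V (m w p)" for w p
  proof -
    define xs where "xs = list_of W @ list_of (PA F V)"
    have ant: "ant W w @ ant (PA F V) p = map (\<lambda>X. (X, m w p X)) xs"
      unfolding ant_def m_def xs_def using lists WP(1) by auto
    have xs: "set xs = Dom - {V}" unfolding xs_def using lists WP(2) by simp
    have Fn: "Fn F V p = Fn F V (m w p)" by (rule Fn_cong[OF F]) (simp add: m_def)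
    show ?thesis unfolding ant Fn by (rule sat_singleton_Cf_all_but[OF G VD xs])
  qed
  have "sat {(s, G)} (eta Dom Ran F V) \<longleftrightarrow>
      (\<forall>w\<in>PiE W Ran. \<forall>p\<in>PiE (PA F V) Ran. ?val (m w p) = Fn F V (m w p))"
    unfolding eta_def Let_def W_def[symmetric] sat_BigAnd set_map list_of_set[OF fin]
    by (simp add: conjunct del: sat.simps(5))
  also have "\<dots> \<longleftrightarrow> (\<forall>r\<in>PiE (Dom - {V}) Ran. ?val r = Fn F V r)"
    using ball_PiE_Un_iff[OF WP(1), of Ran "\<lambda>r. ?val r = Fn F V r"] unfolding m_def WP(2) .
  also have "\<dots> \<longleftrightarrow> V \<in> En G \<and> (\<forall>r\<in>PiE (Dom - {V}) Ran. Fn G V r = Fn F V r)"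
  proof (cases "V \<in> En G")
    case False
    have "\<not> (\<forall>r\<in>PiE (Dom - {V}) Ran. Fn F V r = s V)" using V Cn_iff[OF sig F, of V] by blast
    then show ?thesis using False by (auto simp: eq_commute[of "s V"])
  qed simp
  finally show ?thesis .
qed

lemma sat_singleton_Phi:
  assumes sig: "signature Dom Ran" and G: "is_sys Dom Ran G" and F: "is_sys Dom Ran F"
    and s: "s \<in> PiE Dom Ran" and comp: "compatible s G"
  shows "sat {(s, G)} (Phi Dom Ran F) \<longleftrightarrow> sys_sim Ran G F"
proof -
  let ?N = "\<lambda>H. En H - Cn Ran H"
  have finD: "finite Dom" using sig unfolding signature_def by simp
  have fin: "finite (?N F)" "finite (Dom - ?N F)"
    using finD is_sys_En_subset[OF F] by (auto intro: finite_subset)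
  have "sat {(s, G)} (Phi Dom Ran F) \<longleftrightarrow>
      (\<forall>V\<in>?N F. V \<in> En G \<and> (\<forall>r\<in>PiE (Dom - {V}) Ran. Fn G V r = Fn F V r)) \<and>
      (\<forall>V\<in>Dom - ?N F. V \<notin> ?N G)"
    unfolding Phi_def sat.simps(3) sat_BigAnd set_map list_of_set[OF fin(1)] list_of_set[OF fin(2)]
    using sat_singleton_eta[OF sig G F] sat_singleton_xi[OF sig G _ s comp] by simp
  also have "\<dots> \<longleftrightarrow> sys_sim Ran G F"
  proof
    assume H: "(\<forall>V\<in>?N F. V \<in> En G \<and> (\<forall>r\<in>PiE (Dom - {V}) Ran. Fn G V r = Fn F V r)) \<and>
      (\<forall>V\<in>Dom - ?N F. V \<notin> ?N G)"
    have "V \<notin> Cn Ran G" if "V \<in> ?N F" for V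
      using H that Cn_iff[OF sig G, of V] Cn_iff[OF sig F, of V] by auto
    then have "?N G = ?N F" using H is_sys_En_subset[OF G] by blast
    then show "sys_sim Ran G F" using H sys_sim_iff[OF sig G F] by simp
  next
    assume "sys_sim Ran G F"
    then show "(\<forall>V\<in>?N F. V \<in> En G \<and> (\<forall>r\<in>PiE (Dom - {V}) Ran. Fn G V r = Fn F V r)) \<and>
      (\<forall>V\<in>Dom - ?N F. V \<notin> ?N G)"
      using sys_sim_iff[OF sig G F] by auto
  qed
  finally show ?thesis .
qed

lemma mem_team_minus_team_F:
  "s \<in> team_minus (team_F Ran T F) \<longleftrightarrow> (\<exists>G. (s, G) \<in> T \<and> sys_sim Ran G F)"
  unfolding team_minus_def team_F_def by force

lemma gcteam_memD:
  "gcteam Dom Ran T \<Longrightarrow> (s, G) \<in> T \<Longrightarrow> s \<in> PiE Dom Ran \<and> is_sys Dom Ran G \<and> compatible s G"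
  unfolding gcteam_def Fsig_def by auto

lemma sat_singleton_Theta_Phi:
  assumes sig: "signature Dom Ran" and T: "gcteam Dom Ran T" and F: "is_sys Dom Ran F"
    and s: "s \<in> PiE Dom Ran" and G: "is_sys Dom Ran G" and comp: "compatible s G"
  shows "sat {(s, G)} (And (Theta Dom Ran (team_minus (team_F Ran T F))) (Phi Dom Ran F))
    \<longleftrightarrow> s \<in> team_minus (team_F Ran T F) \<and> sys_sim Ran G F"
proof -
  have sub: "team_minus (team_F Ran T F) \<subseteq> PiE Dom Ran"
    using gcteam_memD[OF T] unfolding mem_team_minus_team_F subset_iff by blast
  moreover have "finite (PiE Dom Ran)" using finite_PiE_signature[OF sig] by simp
  ultimately have "finite (team_minus (team_F Ran T F))" by (rule finite_subset)
  then show ?thesis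
    using sat_singleton_Theta[OF sig _ sub s] sat_singleton_Phi[OF sig G F s comp] by simp
qed

lemma ex_sys_sim_in_team_iff:
  assumes sig: "signature Dom Ran" and T: "gcteam Dom Ran T" and G: "is_sys Dom Ran G"
  shows "(\<exists>F\<in>Fsig Dom Ran. s \<in> team_minus (team_F Ran T F) \<and> sys_sim Ran G F)
    \<longleftrightarrow> (\<exists>H. (s, H) \<in> T \<and> sys_sim Ran H G)"
proof
  assume "\<exists>F\<in>Fsig Dom Ran. s \<in> team_minus (team_F Ran T F) \<and> sys_sim Ran G F"
  then obtain F H where F: "is_sys Dom Ran F" and H: "(s, H) \<in> T" "sys_sim Ran H F"
    and GF: "sys_sim Ran G F"
    unfolding Fsig_def mem_team_minus_team_F by auto
  have "sys_sim Ran H G"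
    using sys_sim_trans[OF sig _ F G H(2) sys_sim_sym[OF GF]] gcteam_memD[OF T H(1)] by blast
  then show "\<exists>H. (s, H) \<in> T \<and> sys_sim Ran H G" using H(1) by blast
next
  assume "\<exists>H. (s, H) \<in> T \<and> sys_sim Ran H G"
  then have "s \<in> team_minus (team_F Ran T G)" unfolding mem_team_minus_team_F .
  then show "\<exists>F\<in>Fsig Dom Ran. s \<in> team_minus (team_F Ran T F) \<and> sys_sim Ran G F"
    using G sys_sim_refl unfolding Fsig_def by blast
qed

lemma team_approx_partners:
  assumes sig: "signature Dom Ran" and S: "gcteam Dom Ran S" and T: "gcteam Dom Ran T"
    and partners: "\<forall>(s, G)\<in>S. \<exists>H. (s, H) \<in> T \<and> sys_sim Ran H G"
  shows "team_approx Dom Ran S {(s, H) \<in> T. \<exists>G. (s, G) \<in> S \<and> sys_sim Ran H G}"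
    (is "team_approx Dom Ran S ?R")
  unfolding team_approx_def
proof (intro ballI equalityI subsetI)
  fix F s assume F: "F \<in> Fsig Dom Ran"
  then have F: "is_sys Dom Ran F" unfolding Fsig_def by simp
  {
    assume "s \<in> team_minus (team_F Ran S F)"
    then obtain G where SG: "(s, G) \<in> S" and GF: "sys_sim Ran G F"
      unfolding mem_team_minus_team_F by blast
    obtain H where TH: "(s, H) \<in> T" and HG: "sys_sim Ran H G" using partners SG by blast
    have "is_sys Dom Ran H" "is_sys Dom Ran G"
      using gcteam_memD[OF T TH] gcteam_memD[OF S SG] by simp_all
    then have "sys_sim Ran H F" using sys_sim_trans[OF sig _ _ F HG GF] by blast
    then show "s \<in> team_minus (team_F Ran ?R F)"
      using TH SG HG unfolding mem_team_minus_team_F by blast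
  }
  {
    assume "s \<in> team_minus (team_F Ran ?R F)"
    then obtain H G where TH: "(s, H) \<in> T" and SG: "(s, G) \<in> S"
      and HG: "sys_sim Ran H G" and HF: "sys_sim Ran H F"
      unfolding mem_team_minus_team_F by blast
    have "is_sys Dom Ran H" "is_sys Dom Ran G"
      using gcteam_memD[OF T TH] gcteam_memD[OF S SG] by simp_all
    then have "sys_sim Ran G F" using sys_sim_trans[OF sig _ _ F sys_sim_sym[OF HG] HF] by blast
    then show "s \<in> team_minus (team_F Ran S F)"
      using SG unfolding mem_team_minus_team_F by blast
  }
qed

lemma team_preceq_iff_partners:
  assumes sig: "signature Dom Ran" and S: "gcteam Dom Ran S" and T: "gcteam Dom Ran T"
  shows "team_preceq Dom Ran S T \<longleftrightarrow> (\<forall>(s, G)\<in>S. \<exists>H. (s, H) \<in> T \<and> sys_sim Ran H G)"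
proof
  assume "team_preceq Dom Ran S T"
  show "\<forall>(s, G)\<in>S. \<exists>H. (s, H) \<in> T \<and> sys_sim Ran H G"
  proof (cases "S = {}")
    case False
    then obtain R where "R \<subseteq> T" and approx: "team_approx Dom Ran S R"
      using \<open>team_preceq Dom Ran S T\<close> unfolding team_preceq_def by auto
    show ?thesis
    proof clarify
      fix s G assume SG: "(s, G) \<in> S"
      then have "G \<in> Fsig Dom Ran" using gcteam_memD[OF S] unfolding Fsig_def by blast
      moreover have "s \<in> team_minus (team_F Ran S G)"
        using SG sys_sim_refl unfolding mem_team_minus_team_F by blast
      ultimately have "s \<in> team_minus (team_F Ran R G)"
        using approx unfolding team_approx_def by blast
      then show "\<exists>H. (s, H) \<in> T \<and> sys_sim Ran H G"
        using \<open>R \<subseteq> T\<close> unfolding mem_team_minus_team_F by blast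
    qed
  qed simp
next
  assume "\<forall>(s, G)\<in>S. \<exists>H. (s, H) \<in> T \<and> sys_sim Ran H G"
  then have "team_approx Dom Ran S {(s, H) \<in> T. \<exists>G. (s, G) \<in> S \<and> sys_sim Ran H G}"
    by (rule team_approx_partners[OF sig S T])
  moreover have "{(s, H) \<in> T. \<exists>G. (s, G) \<in> S \<and> sys_sim Ran H G} \<subseteq> T" by blast
  ultimately show "team_preceq Dom Ran S T" unfolding team_preceq_def by blast
qed

lemma ex_sat_singleton_Theta_Phi_iff:
  assumes sig: "signature Dom Ran" and T: "gcteam Dom Ran T"
    and s: "s \<in> PiE Dom Ran" and G: "is_sys Dom Ran G" and comp: "compatible s G"
  shows "(\<exists>F\<in>Fsig Dom Ran.
      sat {(s, G)} (And (Theta Dom Ran (team_minus (team_F Ran T F))) (Phi Dom Ran F)))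
    \<longleftrightarrow> (\<exists>H. (s, H) \<in> T \<and> sys_sim Ran H G)"
proof -
  have "(\<exists>F\<in>Fsig Dom Ran.
      sat {(s, G)} (And (Theta Dom Ran (team_minus (team_F Ran T F))) (Phi Dom Ran F)))
    \<longleftrightarrow> (\<exists>F\<in>Fsig Dom Ran. s \<in> team_minus (team_F Ran T F) \<and> sys_sim Ran G F)"
    using sat_singleton_Theta_Phi[OF sig T _ s G comp] unfolding Fsig_def by blast
  also have "\<dots> \<longleftrightarrow> (\<exists>H. (s, H) \<in> T \<and> sys_sim Ran H G)"
    by (rule ex_sys_sim_in_team_iff[OF sig T G])
  finally show ?thesis .
qed

theorem corollary4p9:
  fixes Dom :: "'v set" and Ran :: "'v \<Rightarrow> 'a set" and S T :: "('v, 'a) team"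
  assumes "signature Dom Ran"
    and "gcteam Dom Ran S" and "gcteam Dom Ran T"
  shows "sat S (BigOr Dom Ran
           (map (\<lambda>F. And (Theta Dom Ran (team_minus (team_F Ran T F))) (Phi Dom Ran F))
                (list_of (Fsig Dom Ran))))
         \<longleftrightarrow> team_preceq Dom Ran S T"
proof -
  let ?class = "\<lambda>F. And (Theta Dom Ran (team_minus (team_F Ran T F))) (Phi Dom Ran F)"
  have partner: "(\<exists>F\<in>Fsig Dom Ran. sat {(s, G)} (?class F))
      \<longleftrightarrow> (\<exists>H. (s, H) \<in> T \<and> sys_sim Ran H G)" if "(s, G) \<in> S" for s G
    using ex_sat_singleton_Theta_Phi_iff[OF assms(1,3)] gcteam_memD[OF assms(2) that] by blast
  have "sat S (BigOr Dom Ran (map ?class (list_of (Fsig Dom Ran))))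
      \<longleftrightarrow> (\<forall>(s, G)\<in>S. \<exists>F\<in>Fsig Dom Ran. sat {(s, G)} (?class F))"
    by (subst sat_iff_singletons)
      (simp add: sat_singleton_BigOr list_of_set[OF finite_Fsig[OF assms(1)]] del: sat.simps)
  also have "\<dots> \<longleftrightarrow> (\<forall>(s, G)\<in>S. \<exists>H. (s, H) \<in> T \<and> sys_sim Ran H G)"
    using partner by blast
  also have "\<dots> \<longleftrightarrow> team_preceq Dom Ran S T"
    by (rule team_preceq_iff_partners[symmetric, OF assms])
  finally show ?thesis .
qed

end
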